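(* The operator $U$ is bounded from $L^1(\mu_2)$ to $L^p(\mu_2)$ for every $1\le p\le\infty$, and the operator $R$ is bounded from $L^1(\mu_2)$ to $L^q(\mu_2)$ for every $1\le q<2$. Moreover, $R$ is of weak type $(1,2)$ with respect to $\mu_2$. Here $$Uf(r)=\chi_{(1/2,\infty)}(r)\sup_{t\in[1,2],\ t<2r}\frac1r\int_{|r-t|}^{r+t}zf(z)\,dz,\qquad Rf(r)=\chi_{[0,1]}(r)\sup_{t\in[1,2],\ t\ge2r}\frac1r\int_{t-r}^{t+r}f(z)\,dz.$$
   Context: $\mu_2$ is the measure $r\,dr$ on $\mathbb{R}^+$. *)

theory Defs
  imports "HOL-Analysis.Analysis"
begin

definition mu2 :: "real measure" where
  "mu2 = density lborel (\<lambda>r. ennreal (indicator {0<..} r * r))"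

definition U_op :: "(real \<Rightarrow> real) \<Rightarrow> real \<Rightarrow> real" where
  "U_op f r = indicator {1/2<..} r *
     (SUP t\<in>{t. 1 \<le> t \<and> t \<le> 2 \<and> t < 2 * r}. (1 / r) * (LBINT z=\<bar>r - t\<bar>..r + t. z * f z))"

definition R_op :: "(real \<Rightarrow> real) \<Rightarrow> real \<Rightarrow> real" where
  "R_op f r = indicator {0..1} r *
     (SUP t\<in>{t. 1 \<le> t \<and> t \<le> 2 \<and> 2 * r \<le> t}. (1 / r) * (LBINT z=t - r..t + r. f z))"

end

theory Submission
  imports Defs
begin

(* Both operators are controlled pointwise by N = \<integral>|f| d\<mu>\<^sub>2.
   For U and r > 1/2, each interval [|r - t|, r + t] lies in [r - 2, r + 2], so r |Uf(r)| is at
   most the mass W(r) of |f| \<mu>\<^sub>2 on that window.  Hence |Uf| \<le> 2N, and by Tonelli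
   \<integral>W(r) dr = 4N, so \<integral>|Uf|^p d\<mu>\<^sub>2 \<le> (2N)^(p-1) \<integral>W(r) dr \<le> (4N)^p.
   For R the intervals [t - r, t + r] lie in [1/2, \<infinity>), where dz \<le> 2z dz, so |Rf(r)| \<le> 2N/r
   on [0, 1].  Then \<integral>|Rf|^q d\<mu>\<^sub>2 \<le> (2N)^q \<integral>\<^sub>0\<^sup>1 r^(1-q) dr, finite exactly for q < 2, and
   {|Rf| > s} \<subseteq> [0, 2N/s] has \<mu>\<^sub>2-measure at most (2N/s)^2.
   Both suprema are lower semicontinuous, hence Borel, since each average depends continuously
   on r and, for R after an affine reparametrization, ranges over an index set independent of r. *)

lemma abs_interval_integral_le:
  fixes g k :: "real \<Rightarrow> real"
  assumes [measurable]: "g \<in> borel_measurable borel"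
    and "set_integrable lborel {a..b} k" "a \<le> b" "\<And>z. z \<in> {a..b} \<Longrightarrow> \<bar>g z\<bar> \<le> k z"
  shows "\<bar>LBINT z=a..b. g z\<bar> \<le> (LINT z:{a..b}|lborel. k z)"
proof -
  have "set_integrable lborel {a..b} g"
  proof (rule set_integrable_bound[OF assms(2)])
    show "set_borel_measurable lborel {a..b} g"
      unfolding set_borel_measurable_def by measurable
    show "AE z in lborel. z \<in> {a..b} \<longrightarrow> norm (g z) \<le> norm (k z)"
      using assms(4) by (auto intro!: AE_I2 order_trans[OF _ abs_ge_self])
  qed
  then have "\<bar>LINT z:{a..b}|lborel. g z\<bar> \<le> (LINT z:{a..b}|lborel. k z)"
    using assms(2,4) unfolding set_lebesgue_integral_def set_integrable_def
    by (intro integral_abs_bound_integral) (auto split: split_indicator)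
  then show ?thesis
    using assms(3) by (simp add: interval_integral_Icc)
qed

lemma nn_integral_window_integral:
  fixes h :: "real \<Rightarrow> real"
  assumes "integrable lborel h" "\<And>z. 0 \<le> h z" "0 \<le> a"
  shows "(\<integral>\<^sup>+r. ennreal (LINT z:{r-a..r+a}|lborel. h z) \<partial>lborel)
    = ennreal (2 * a * (\<integral>z. h z \<partial>lborel))"
proof -
  have [measurable]: "h \<in> borel_measurable borel"
    using assms(1) by simp
  have inner: "ennreal (LINT z:{r-a..r+a}|lborel. h z)
      = (\<integral>\<^sup>+z. ennreal (h z * indicator {..a} \<bar>z - r\<bar>) \<partial>lborel)" for r
  proof -
    have "set_integrable lborel {r-a..r+a} h"
      unfolding set_integrable_def using assms(1) by (rule integrable_mult_indicator[rotated]) simp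
    then have "ennreal (LINT z:{r-a..r+a}|lborel. h z)
        = (\<integral>\<^sup>+z. ennreal (indicator {r-a..r+a} z * h z) \<partial>lborel)"
      unfolding set_lebesgue_integral_def set_integrable_def
      using assms(2) by (subst nn_integral_eq_integral) auto
    also have "\<dots> = (\<integral>\<^sup>+z. ennreal (h z * indicator {..a} \<bar>z - r\<bar>) \<partial>lborel)"
      by (intro nn_integral_cong) (auto split: split_indicator simp: abs_le_iff)
    finally show ?thesis .
  qed
  have outer: "(\<integral>\<^sup>+r. ennreal (h z * indicator {..a} \<bar>z - r\<bar>) \<partial>lborel)
      = ennreal (h z) * ennreal (2 * a)" for z
  proof -
    have "(\<integral>\<^sup>+r. ennreal (h z * indicator {..a} \<bar>z - r\<bar>) \<partial>lborel)
        = (\<integral>\<^sup>+r. ennreal (h z) * indicator {z-a..z+a} r \<partial>lborel)"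
      by (intro nn_integral_cong) (auto split: split_indicator simp: abs_le_iff)
    then show ?thesis
      using assms(3) by (simp add: nn_integral_cmult_indicator)
  qed
  have "(\<integral>\<^sup>+r. ennreal (LINT z:{r-a..r+a}|lborel. h z) \<partial>lborel)
      = (\<integral>\<^sup>+r. \<integral>\<^sup>+z. ennreal (h z * indicator {..a} \<bar>z - r\<bar>) \<partial>lborel \<partial>lborel)"
    by (simp add: inner)
  also have "\<dots> = (\<integral>\<^sup>+z. \<integral>\<^sup>+r. ennreal (h z * indicator {..a} \<bar>z - r\<bar>) \<partial>lborel \<partial>lborel)"
    by (rule lborel_pair.Fubini') measurable
  also have "\<dots> = (\<integral>\<^sup>+z. ennreal (h z) \<partial>lborel) * ennreal (2 * a)"
    by (simp add: outer nn_integral_multc)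
  also have "\<dots> = ennreal (2 * a * (\<integral>z. h z \<partial>lborel))"
    using assms by (simp add: nn_integral_eq_integral ennreal_mult'[symmetric] integral_nonneg_AE mult.commute)
  finally show ?thesis .
qed

lemma continuous_on_indefinite_integral_Ici:
  fixes g :: "real \<Rightarrow> real"
  assumes "\<And>d. g integrable_on {c..d}"
  shows "continuous_on {c..} (\<lambda>x. integral {c..x} g)"
  unfolding continuous_on_eq_continuous_within
proof
  fix x assume "x \<in> {c..}"
  have "continuous_on {c..x+1} (\<lambda>x. integral {c..x} g)"
    using assms by (rule indefinite_integral_continuous_1)
  then have "continuous (at x within {c..x+1}) (\<lambda>x. integral {c..x} g)"
    using \<open>x \<in> {c..}\<close> by (simp add: continuous_on_eq_continuous_within)
  moreover have "at x within {c..x+1} = at x within {c..}"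
    by (rule at_within_nhd[of _ "{..<x+1}"]) auto
  ultimately show "continuous (at x within {c..}) (\<lambda>x. integral {c..x} g)"
    by simp
qed

lemma continuous_on_interval_integral:
  fixes g :: "real \<Rightarrow> real"
  assumes g: "set_integrable lborel {c..} g"
    and "continuous_on S a" "continuous_on S b" "\<And>r. r \<in> S \<Longrightarrow> c \<le> a r \<and> a r \<le> b r"
  shows "continuous_on S (\<lambda>r. LBINT z=a r..b r. g z)"
proof -
  have integrable_on: "g integrable_on {x..y}" if "c \<le> x" for x y
    using that by (intro set_borel_integral_eq_integral(1) set_integrable_subset[OF g]) auto
  define \<Phi> where "\<Phi> x = integral {c..x} g" for x
  have \<Phi>: "continuous_on {c..} \<Phi>"
    unfolding \<Phi>_def by (intro continuous_on_indefinite_integral_Ici integrable_on) simp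
  have "continuous_on S (\<lambda>r. \<Phi> (b r))" "continuous_on S (\<lambda>r. \<Phi> (a r))"
    using assms(4)
    by (force intro: continuous_on_compose2[OF \<Phi> assms(3)] continuous_on_compose2[OF \<Phi> assms(2)])+
  then have cont: "continuous_on S (\<lambda>r. \<Phi> (b r) - \<Phi> (a r))"
    by (rule continuous_on_diff)
  have eq: "(LBINT z=a r..b r. g z) = \<Phi> (b r) - \<Phi> (a r)" if "r \<in> S" for r
  proof -
    have ab: "c \<le> a r" "a r \<le> b r"
      using assms(4)[OF that] by auto
    have "set_integrable lborel {a r..b r} g"
      using ab by (intro set_integrable_subset[OF g]) auto
    then have "(LBINT z=a r..b r. g z) = integral {a r..b r} g"
      using ab(2) by (simp add: interval_integral_Icc set_borel_integral_eq_integral(2))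
    also have "\<dots> = \<Phi> (b r) - \<Phi> (a r)"
      unfolding \<Phi>_def
      using Henstock_Kurzweil_Integration.integral_combine[OF ab integrable_on[OF order_refl]] by simp
    finally show ?thesis .
  qed
  show ?thesis
    using cont by (rule continuous_on_eq) (simp add: eq)
qed

lemma open_Collect_less_SUP:
  fixes h :: "'a::topological_space \<Rightarrow> 'b \<Rightarrow> real"
  assumes "\<And>r. r \<in> D \<Longrightarrow> T r \<noteq> {}" "\<And>r. r \<in> D \<Longrightarrow> bdd_above (h r ` T r)"
    and "\<And>t. open {r \<in> D. t \<in> T r}" "\<And>t. continuous_on {r \<in> D. t \<in> T r} (\<lambda>r. h r t)"
  shows "open {r \<in> D. c < (SUP t\<in>T r. h r t)}"
proof -
  have "{r \<in> D. c < (SUP t\<in>T r. h r t)} = (\<Union>t. {r \<in> D. t \<in> T r} \<inter> (\<lambda>r. h r t) -` {c<..})"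
    using assms(1,2) by (auto simp: less_cSUP_iff)
  also have "open \<dots>"
    using assms(3,4) by (intro open_UN ballI continuous_open_preimage) auto
  finally show ?thesis .
qed

lemma borel_measurable_indicator_mult_lsc:
  fixes F :: "'a::topological_space \<Rightarrow> real"
  assumes "open D" "\<And>c. open {r \<in> D. c < F r}"
  shows "(\<lambda>r. indicator D r * F r) \<in> borel_measurable borel"
  unfolding borel_measurable_iff_greater
proof
  fix c
  have "{r \<in> space borel. c < indicator D r * F r} = {r \<in> D. c < F r} \<union> {r. r \<notin> D \<and> c < 0}"
    by (auto split: split_indicator)
  moreover have "{r. r \<notin> D \<and> c < 0} \<in> sets borel"
    using \<open>open D\<close> by (cases "c < 0") (auto simp: Compl_eq[symmetric])
  ultimately show "{r \<in> space borel. c < indicator D r * F r} \<in> sets borel"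
    using assms(2) by auto
qed

lemma powr_le_powr_minus_one_mult:
  fixes x B p :: real
  assumes "0 \<le> x" "x \<le> B" "1 \<le> p"
  shows "x powr p \<le> B powr (p - 1) * x"
proof (cases "x = 0")
  case False
  then have "x powr p = x powr (p - 1) * x"
    using assms(1) by (simp add: powr_diff)
  also have "\<dots> \<le> B powr (p - 1) * x"
    using assms by (intro mult_right_mono powr_mono2) auto
  finally show ?thesis .
qed (use assms in simp)

lemma powr_inverse_le:
  fixes I X p :: real
  assumes "0 \<le> I" "0 \<le> X" "I \<le> X powr p" "0 < p"
  shows "I powr (1 / p) \<le> X"
proof -
  have "I powr (1 / p) \<le> (X powr p) powr (1 / p)"
    using assms by (intro powr_mono2) auto
  also have "\<dots> = X"
    using assms by (simp add: powr_powr)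
  finally show ?thesis .
qed

lemma nn_integral_powr_unit_interval:
  fixes a :: real
  assumes "-1 < a"
  shows "(\<integral>\<^sup>+x. ennreal (indicator {0..1} x * x powr a) \<partial>lborel) = ennreal (1 / (a + 1))"
  using nn_integral_has_integral_lebesgue[OF _ has_integral_powr_from_0[OF assms, of 1]] by simp

section \<open>The measure mu2\<close>

lemma sets_mu2 [simp, measurable_cong]: "sets mu2 = sets borel"
  by (simp add: mu2_def)

lemma space_mu2 [simp]: "space mu2 = UNIV"
  by (simp add: mu2_def)

lemma borel_measurable_mu2: "borel_measurable mu2 = borel_measurable borel"
  by (rule measurable_cong_sets) simp_all

lemma nn_integral_mu2:
  assumes "g \<in> borel_measurable borel"
  shows "(\<integral>\<^sup>+r. g r \<partial>mu2) = (\<integral>\<^sup>+r. ennreal (indicator {0<..} r * r) * g r \<partial>lborel)"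
  unfolding mu2_def using assms by (subst nn_integral_density) auto

lemma integrable_mu2_iff:
  fixes f :: "real \<Rightarrow> real"
  assumes "f \<in> borel_measurable borel"
  shows "integrable mu2 f \<longleftrightarrow> integrable lborel (\<lambda>r. indicator {0<..} r * r * f r)"
  unfolding mu2_def using assms
  by (subst integrable_density) (auto simp: mult.assoc split: split_indicator)

lemma integral_mu2:
  fixes f :: "real \<Rightarrow> real"
  assumes "f \<in> borel_measurable borel"
  shows "(\<integral>r. f r \<partial>mu2) = (\<integral>r. indicator {0<..} r * r * f r \<partial>lborel)"
  unfolding mu2_def using assms
  by (subst integral_density) (auto simp: mult.assoc split: split_indicator)

lemma integrable_mu2_bound:
  fixes g :: "real \<Rightarrow> real" and k :: "real \<Rightarrow> ennreal"
  assumes [measurable]: "g \<in> borel_measurable borel"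
    and "\<And>r. 0 \<le> g r" "\<And>r. 0 < r \<Longrightarrow> ennreal (r * g r) \<le> k r"
    and "(\<integral>\<^sup>+r. k r \<partial>lborel) \<le> ennreal B" "0 \<le> B"
  shows "integrable mu2 g" "(\<integral>r. g r \<partial>mu2) \<le> B"
proof -
  have "(\<integral>\<^sup>+r. ennreal (g r) \<partial>mu2)
      = (\<integral>\<^sup>+r. ennreal (indicator {0<..} r * r) * ennreal (g r) \<partial>lborel)"
    by (simp add: nn_integral_mu2)
  also have "\<dots> \<le> (\<integral>\<^sup>+r. k r \<partial>lborel)"
    using assms(2,3) by (intro nn_integral_mono) (auto simp: ennreal_mult[symmetric] split: split_indicator)
  also have "\<dots> \<le> ennreal B"
    by fact
  finally have nn: "(\<integral>\<^sup>+r. ennreal (g r) \<partial>mu2) \<le> ennreal B" .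
  then show int: "integrable mu2 g"
    using assms(2) by (intro integrableI_nonneg) (auto simp: borel_measurable_mu2 less_top[symmetric] top_unique)
  have "ennreal (\<integral>r. g r \<partial>mu2) \<le> ennreal B"
    using nn int assms(2) by (subst nn_integral_eq_integral[symmetric]) auto
  then show "(\<integral>r. g r \<partial>mu2) \<le> B"
    using \<open>0 \<le> B\<close> by simp
qed

lemma emeasure_mu2_atLeastAtMost_le:
  assumes "0 \<le> a"
  shows "emeasure mu2 {0..a} \<le> ennreal (a\<^sup>2)"
proof -
  have "emeasure mu2 {0..a}
      = (\<integral>\<^sup>+x. ennreal (indicator {0<..} x * x) * indicator {0..a} x \<partial>lborel)"
    unfolding mu2_def by (subst emeasure_density) auto
  also have "\<dots> \<le> (\<integral>\<^sup>+x. ennreal a * indicator {0..a} x \<partial>lborel)"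
    by (intro nn_integral_mono) (auto split: split_indicator intro!: ennreal_leI)
  also have "\<dots> = ennreal (a\<^sup>2)"
    using assms by (simp add: nn_integral_cmult_indicator ennreal_mult[symmetric] power2_eq_square)
  finally show ?thesis .
qed

lemma borel_measurable_integrable_mu2:
  "integrable mu2 f \<Longrightarrow> f \<in> borel_measurable borel"
  using borel_measurable_integrable borel_measurable_mu2 by blast

definition abs_density :: "(real \<Rightarrow> real) \<Rightarrow> real \<Rightarrow> real" where
  "abs_density f z = indicator {0<..} z * z * \<bar>f z\<bar>"

lemma abs_density_nonneg: "0 \<le> abs_density f z"
  by (simp add: abs_density_def split: split_indicator)

lemma abs_le_abs_density:
  assumes "0 < c" "c \<le> z"
  shows "c * \<bar>f z\<bar> \<le> abs_density f z"
  using assms by (simp add: abs_density_def mult_right_mono)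

lemma
  fixes f :: "real \<Rightarrow> real"
  assumes "integrable mu2 f"
  shows integrable_abs_density: "integrable lborel (abs_density f)"
    and integral_abs_density: "(\<integral>z. abs_density f z \<partial>lborel) = (\<integral>z. \<bar>f z\<bar> \<partial>mu2)"
proof -
  have [measurable]: "f \<in> borel_measurable borel"
    using assms by (rule borel_measurable_integrable_mu2)
  have "integrable mu2 (\<lambda>z. \<bar>f z\<bar>)"
    using assms by (rule integrable_abs)
  then show "integrable lborel (abs_density f)"
    by (subst (asm) integrable_mu2_iff) (auto simp: abs_density_def[abs_def])
  show "(\<integral>z. abs_density f z \<partial>lborel) = (\<integral>z. \<bar>f z\<bar> \<partial>mu2)"
    by (simp add: integral_mu2 abs_density_def)
qed

context
  fixes f :: "real \<Rightarrow> real"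
  assumes f: "integrable mu2 f"
begin

lemma set_integral_abs_density_mono:
  assumes "A \<in> sets borel" "B \<in> sets borel" "A \<subseteq> B"
  shows "(LINT z:A|lborel. abs_density f z) \<le> (LINT z:B|lborel. abs_density f z)"
  unfolding set_lebesgue_integral_def using assms integrable_abs_density[OF f]
  by (intro integral_mono integrable_mult_indicator)
     (auto simp: abs_density_nonneg split: split_indicator)

lemma set_integral_abs_density_le:
  assumes "A \<in> sets borel"
  shows "(LINT z:A|lborel. abs_density f z) \<le> (\<integral>z. \<bar>f z\<bar> \<partial>mu2)"
  using set_integral_abs_density_mono[OF assms, of UNIV]
  by (simp add: integral_abs_density[OF f] set_lebesgue_integral_def)

lemma set_integrable_Ici:
  assumes "0 < c"
  shows "set_integrable lborel {c..} f"
  unfolding set_integrable_def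
proof (rule Bochner_Integration.integrable_bound)
  show "integrable lborel (\<lambda>z. abs_density f z / c)"
    using integrable_abs_density[OF f] by simp
  show "(\<lambda>z. indicator {c..} z *\<^sub>R f z) \<in> borel_measurable lborel"
    using borel_measurable_integrable_mu2[OF f] by simp
  show "AE z in lborel. norm (indicator {c..} z *\<^sub>R f z) \<le> norm (abs_density f z / c)"
    using assms abs_le_abs_density abs_density_nonneg
    by (auto intro!: AE_I2 simp: field_simps split: split_indicator)
qed

lemma abs_interval_integral_le_mu2:
  fixes a b c :: real
  assumes "0 < c" "c \<le> a" "a \<le> b"
  shows "\<bar>LBINT z=a..b. f z\<bar> \<le> (\<integral>z. \<bar>f z\<bar> \<partial>mu2) / c"
proof -
  have "set_integrable lborel {a..b} (\<lambda>z. abs_density f z / c)"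
    unfolding set_integrable_def using integrable_abs_density[OF f]
    by (intro integrable_mult_indicator) auto
  then have "\<bar>LBINT z=a..b. f z\<bar> \<le> (LINT z:{a..b}|lborel. abs_density f z / c)"
    using assms abs_le_abs_density[OF assms(1)] borel_measurable_integrable_mu2[OF f]
    by (intro abs_interval_integral_le) (auto simp: field_simps)
  also have "\<dots> \<le> (\<integral>z. \<bar>f z\<bar> \<partial>mu2) / c"
    using assms(1) set_integral_abs_density_le[of "{a..b}"] by (simp add: divide_right_mono)
  finally show ?thesis .
qed

end

section \<open>The operator U\<close>

definition window_mass :: "(real \<Rightarrow> real) \<Rightarrow> real \<Rightarrow> real" where
  "window_mass f r = (LINT z:{r-2..r+2}|lborel. abs_density f z)"

definition U_avg :: "(real \<Rightarrow> real) \<Rightarrow> real \<Rightarrow> real \<Rightarrow> real" where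
  "U_avg f r t = (1 / r) * (LBINT z=\<bar>r - t\<bar>..r + t. z * f z)"

lemma U_op_eq_SUP:
  "U_op f r = indicator {1/2<..} r * (SUP t\<in>{t. 1 \<le> t \<and> t \<le> 2 \<and> t < 2 * r}. U_avg f r t)"
  unfolding U_op_def U_avg_def ..

context
  fixes f :: "real \<Rightarrow> real"
  assumes f: "integrable mu2 f"
begin

lemma window_mass_nonneg: "0 \<le> window_mass f r"
  unfolding window_mass_def set_lebesgue_integral_def
  by (intro integral_nonneg_AE) (simp add: abs_density_nonneg)

lemma window_mass_le: "window_mass f r \<le> (\<integral>z. \<bar>f z\<bar> \<partial>mu2)"
  unfolding window_mass_def by (rule set_integral_abs_density_le[OF f]) simp

lemma abs_U_avg_le:
  assumes "0 < r" "0 \<le> t" "t \<le> 2"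
  shows "\<bar>U_avg f r t\<bar> \<le> window_mass f r / r"
proof -
  have [measurable]: "f \<in> borel_measurable borel"
    using f by (rule borel_measurable_integrable_mu2)
  have "set_integrable lborel {\<bar>r - t\<bar>..r + t} (abs_density f)"
    unfolding set_integrable_def by (intro integrable_mult_indicator integrable_abs_density[OF f]) auto
  then have "\<bar>LBINT z=\<bar>r - t\<bar>..r + t. z * f z\<bar>
      \<le> (LINT z:{\<bar>r - t\<bar>..r + t}|lborel. abs_density f z)"
    by (rule abs_interval_integral_le[rotated])
       (use assms in \<open>auto simp: abs_density_def abs_mult split: split_indicator\<close>)
  also have "\<dots> \<le> window_mass f r"
    unfolding window_mass_def using assms by (intro set_integral_abs_density_mono[OF f]) auto
  finally show ?thesis
    using assms(1) by (simp add: U_avg_def abs_mult divide_right_mono)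
qed

lemma abs_U_op_le: "\<bar>U_op f r\<bar> \<le> indicator {1/2<..} r * (window_mass f r / r)"
proof (cases "1/2 < r")
  case True
  have "\<bar>SUP t\<in>{t. 1 \<le> t \<and> t \<le> 2 \<and> t < 2 * r}. U_avg f r t\<bar> \<le> window_mass f r / r"
    using True by (intro cSup_abs_le) (auto intro!: abs_U_avg_le exI[of _ 1])
  then show ?thesis
    using True by (simp add: U_op_eq_SUP)
qed (simp add: U_op_eq_SUP)

lemma abs_U_op_le_norm: "\<bar>U_op f r\<bar> \<le> 2 * (\<integral>z. \<bar>f z\<bar> \<partial>mu2)"
proof (cases "1/2 < r")
  case True
  have "window_mass f r / r \<le> (\<integral>z. \<bar>f z\<bar> \<partial>mu2) / r"
    using True window_mass_le by (simp add: divide_right_mono)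
  also have "\<dots> \<le> (\<integral>z. \<bar>f z\<bar> \<partial>mu2) / (1/2)"
    using True by (intro divide_left_mono) auto
  finally show ?thesis
    using abs_U_op_le[of r] True by simp
next
  case False
  then show ?thesis
    using abs_U_op_le[of r] by simp
qed

lemma borel_measurable_U_op: "U_op f \<in> borel_measurable borel"
proof -
  let ?T = "\<lambda>r::real. {t. 1 \<le> t \<and> t \<le> 2 \<and> t < 2 * r}"
  have "integrable lborel (\<lambda>z. indicator {0<..} z * z * f z)"
    using f borel_measurable_integrable_mu2[OF f] by (simp add: integrable_mu2_iff)
  moreover have "indicator {0<..} z * z * f z = indicator {0..} z *\<^sub>R (z * f z)" for z :: real
    by (simp split: split_indicator)
  ultimately have g: "set_integrable lborel {0..} (\<lambda>z. z * f z)"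
    unfolding set_integrable_def by simp
  have "open {r \<in> {1/2::real<..}. c < (SUP t\<in>?T r. U_avg f r t)}" for c
  proof (rule open_Collect_less_SUP)
    fix r :: real assume r: "r \<in> {1/2<..}"
    then show "?T r \<noteq> {}"
      by (auto intro!: exI[of _ 1])
    show "bdd_above (U_avg f r ` ?T r)"
      using r abs_U_avg_le[of r] by (intro bdd_aboveI2[of _ _ "window_mass f r / r"]) (force simp: abs_le_iff)
  next
    fix t :: real
    have eq: "{r \<in> {1/2<..}. t \<in> ?T r} = (if 1 \<le> t \<and> t \<le> 2 then {max (1/2) (t/2)<..} else {})"
      by auto
    then show "open {r \<in> {1/2<..}. t \<in> ?T r}"
      by simp
    have "continuous_on {r \<in> {1/2<..}. t \<in> ?T r} (\<lambda>r. LBINT z=\<bar>r - t\<bar>..r + t. z * f z)"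
      by (rule continuous_on_interval_integral[OF g]) (auto intro!: continuous_intros)
    then show "continuous_on {r \<in> {1/2<..}. t \<in> ?T r} (\<lambda>r. U_avg f r t)"
      unfolding U_avg_def by (intro continuous_intros) auto
  qed
  then have "(\<lambda>r. indicator {1/2<..} r * (SUP t\<in>?T r. U_avg f r t)) \<in> borel_measurable borel"
    by (intro borel_measurable_indicator_mult_lsc) auto
  then show ?thesis
    by (simp add: U_op_eq_SUP[abs_def])
qed

lemma U_op_Lp:
  assumes p: "1 \<le> p"
  shows "integrable mu2 (\<lambda>r. \<bar>U_op f r\<bar> powr p)"
    and "(\<integral>r. \<bar>U_op f r\<bar> powr p \<partial>mu2) \<le> (4 * (\<integral>z. \<bar>f z\<bar> \<partial>mu2)) powr p"
proof -
  define N where "N = (\<integral>z. \<bar>f z\<bar> \<partial>mu2)"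
  have N: "0 \<le> N"
    unfolding N_def by (intro integral_nonneg_AE) simp
  have [measurable]: "U_op f \<in> borel_measurable borel"
    by (rule borel_measurable_U_op)
  define k where "k r = ennreal ((2 * N) powr (p - 1) * window_mass f r)" for r
  have pointwise: "ennreal (r * \<bar>U_op f r\<bar> powr p) \<le> k r" if "0 < r" for r
    unfolding k_def
  proof (rule ennreal_leI)
    have "r * \<bar>U_op f r\<bar> powr p \<le> r * ((2 * N) powr (p - 1) * \<bar>U_op f r\<bar>)"
      using that powr_le_powr_minus_one_mult[OF abs_ge_zero abs_U_op_le_norm p]
      by (simp add: N_def)
    also have "\<dots> = (2 * N) powr (p - 1) * (r * \<bar>U_op f r\<bar>)"
      by simp
    also have "\<dots> \<le> (2 * N) powr (p - 1) * window_mass f r"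
      using abs_U_op_le[of r] that window_mass_nonneg[of r]
      by (intro mult_left_mono) (cases "1/2 < r"; simp add: field_simps)+
    finally show "r * \<bar>U_op f r\<bar> powr p \<le> (2 * N) powr (p - 1) * window_mass f r" .
  qed
  have "(\<integral>\<^sup>+r. k r \<partial>lborel) = ennreal ((2 * N) powr (p - 1) * (4 * N))"
    unfolding k_def
    using nn_integral_window_integral[of "\<lambda>z. (2 * N) powr (p - 1) * abs_density f z" 2]
    by (simp add: integrable_abs_density[OF f] abs_density_nonneg window_mass_def
        integral_abs_density[OF f] N_def mult_ac)
  also have "\<dots> \<le> ennreal ((4 * N) powr (p - 1) * (4 * N))"
    using N p by (intro ennreal_leI mult_right_mono powr_mono2) auto
  also have "(4 * N) powr (p - 1) * (4 * N) = (4 * N) powr p"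
    using p N by (cases "N = 0") (simp_all add: powr_diff)
  finally have "(\<integral>\<^sup>+r. k r \<partial>lborel) \<le> ennreal ((4 * N) powr p)" .
  from integrable_mu2_bound[OF _ _ pointwise this]
  show "integrable mu2 (\<lambda>r. \<bar>U_op f r\<bar> powr p)"
    and "(\<integral>r. \<bar>U_op f r\<bar> powr p \<partial>mu2) \<le> (4 * (\<integral>z. \<bar>f z\<bar> \<partial>mu2)) powr p"
    by (simp_all add: N_def)
qed

lemma U_op_Lp_norm_le:
  assumes "1 \<le> p"
  shows "(\<integral>r. \<bar>U_op f r\<bar> powr p \<partial>mu2) powr (1 / p) \<le> 4 * (\<integral>z. \<bar>f z\<bar> \<partial>mu2)"
  using assms U_op_Lp(2)[OF assms] by (intro powr_inverse_le) (auto intro: integral_nonneg_AE)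

end

section \<open>The operator R\<close>

definition R_avg :: "(real \<Rightarrow> real) \<Rightarrow> real \<Rightarrow> real \<Rightarrow> real" where
  "R_avg f r t = (1 / r) * (LBINT z=t - r..t + r. f z)"

lemma R_op_eq_SUP:
  "R_op f r = indicator {0..1} r * (SUP t\<in>{t. 1 \<le> t \<and> t \<le> 2 \<and> 2 * r \<le> t}. R_avg f r t)"
  unfolding R_op_def R_avg_def ..

(* Reparametrizes the index set {max 1 (2 r)..2} of R_op by the fixed set [0, 1]: since the
   constraint 2 r \<le> t is closed in r, open_Collect_less_SUP does not apply to the original sets. *)
definition R_param :: "real \<Rightarrow> real \<Rightarrow> real" where
  "R_param r s = (1 - s) * max 1 (2 * r) + s * 2"

lemma R_param_image:
  assumes "r \<le> 1"
  shows "R_param r ` {0..1} = {t. 1 \<le> t \<and> t \<le> 2 \<and> 2 * r \<le> t}"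
proof -
  have "R_param r ` {0..1} = closed_segment (max 1 (2 * r)) 2"
    by (simp add: closed_segment_image_interval R_param_def[abs_def])
  also have "\<dots> = {max 1 (2 * r)..2}"
    using assms by (intro closed_segment_eq_real_ivl1) auto
  finally show ?thesis
    by auto
qed

context
  fixes f :: "real \<Rightarrow> real"
  assumes f: "integrable mu2 f"
begin

(* Also for r = 0, where both sides vanish since 1 / 0 = 0. *)
lemma abs_R_avg_le:
  assumes "0 \<le> r" "1 \<le> t" "2 * r \<le> t"
  shows "\<bar>R_avg f r t\<bar> \<le> 2 * (\<integral>z. \<bar>f z\<bar> \<partial>mu2) / r"
proof (cases "r = 0")
  case False
  have "\<bar>LBINT z=t - r..t + r. f z\<bar> \<le> (\<integral>z. \<bar>f z\<bar> \<partial>mu2) / (1/2)"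
    using assms by (intro abs_interval_integral_le_mu2[OF f]) auto
  then show ?thesis
    using assms False by (simp add: R_avg_def abs_mult divide_right_mono)
qed (simp add: R_avg_def)

lemma abs_R_op_le: "\<bar>R_op f r\<bar> \<le> indicator {0..1} r * (2 * (\<integral>z. \<bar>f z\<bar> \<partial>mu2) / r)"
proof (cases "r \<in> {0..1}")
  case True
  have "\<bar>SUP t\<in>{t. 1 \<le> t \<and> t \<le> 2 \<and> 2 * r \<le> t}. R_avg f r t\<bar>
      \<le> 2 * (\<integral>z. \<bar>f z\<bar> \<partial>mu2) / r"
    using True by (intro cSup_abs_le) (auto intro!: abs_R_avg_le exI[of _ 2])
  then show ?thesis
    using True by (simp add: R_op_eq_SUP)
qed (simp add: R_op_eq_SUP)

lemma borel_measurable_R_op: "R_op f \<in> borel_measurable borel"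
proof -
  define F where "F r = (SUP s\<in>{0..1}. R_avg f r (R_param r s))" for r
  have R_param: "1 \<le> R_param r s \<and> R_param r s \<le> 2 \<and> 2 * r \<le> R_param r s"
    if "r \<le> 1" "s \<in> {0..1}" for r s
    using R_param_image[OF that(1)] that(2) by blast
  have g: "set_integrable lborel {1/2..} f"
    by (rule set_integrable_Ici[OF f]) simp
  have "open {r \<in> {0<..<1}. c < F r}" for c
    unfolding F_def
  proof (rule open_Collect_less_SUP)
    fix r :: real assume r: "r \<in> {0<..<1}"
    show "bdd_above ((\<lambda>s. R_avg f r (R_param r s)) ` {0..1})"
      using r R_param abs_R_avg_le
      by (intro bdd_aboveI2[of _ _ "2 * (\<integral>z. \<bar>f z\<bar> \<partial>mu2) / r"]) (force simp: abs_le_iff)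
  next
    fix s :: real
    have eq: "{r \<in> {0::real<..<1}. s \<in> {0..1}} = (if s \<in> {0..1} then {0<..<1} else {})"
      by auto
    show "open {r \<in> {0::real<..<1}. s \<in> {0..1}}"
      unfolding eq by simp
    show "continuous_on {r \<in> {0<..<1}. s \<in> {0..1}} (\<lambda>r. R_avg f r (R_param r s))"
    proof (cases "s \<in> {0..1}")
      case True
      have "1/2 \<le> R_param r s - r \<and> R_param r s - r \<le> R_param r s + r" if "r \<in> {0<..<1}" for r
        using R_param[OF _ True, of r] that by auto
      then have "continuous_on {0<..<1} (\<lambda>r. LBINT z=R_param r s - r..R_param r s + r. f z)"
        by (intro continuous_on_interval_integral[OF g])
           (auto simp del: R_param_def intro!: continuous_intros simp: R_param_def[abs_def])
      then have "continuous_on {0<..<1} (\<lambda>r. R_avg f r (R_param r s))"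
        unfolding R_avg_def by (intro continuous_intros) auto
      then show ?thesis
        by (rule continuous_on_subset) auto
    next
      case False
      then show ?thesis
        unfolding eq by auto
    qed
  qed simp
  then have "(\<lambda>r. indicator {0<..<1} r * F r) \<in> borel_measurable borel"
    by (intro borel_measurable_indicator_mult_lsc) auto
  then show ?thesis
  proof (rule measurable_discrete_difference[where X = "{0, 1}"])
    fix r :: real assume "r \<notin> {0, 1}"
    then show "indicator {0<..<1} r * F r = R_op f r"
      by (cases "r \<in> {0<..<1}") (auto simp: R_op_eq_SUP F_def R_param_image[symmetric] image_image)
  qed auto
qed

lemma R_op_Lq:
  assumes q: "1 \<le> q" "q < 2"
  shows "integrable mu2 (\<lambda>r. \<bar>R_op f r\<bar> powr q)"
    and "(\<integral>r. \<bar>R_op f r\<bar> powr q \<partial>mu2) \<le> (2 * (\<integral>z. \<bar>f z\<bar> \<partial>mu2)) powr q / (2 - q)"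
proof -
  define N where "N = (\<integral>z. \<bar>f z\<bar> \<partial>mu2)"
  have N: "0 \<le> N"
    unfolding N_def by (intro integral_nonneg_AE) simp
  have [measurable]: "R_op f \<in> borel_measurable borel"
    by (rule borel_measurable_R_op)
  define k where "k r = ennreal ((2 * N) powr q * (indicator {0..1} r * r powr (1 - q)))" for r
  have pointwise: "ennreal (r * \<bar>R_op f r\<bar> powr q) \<le> k r" if "0 < r" for r
    unfolding k_def
  proof (rule ennreal_leI, cases "r \<le> 1")
    case True
    have "\<bar>R_op f r\<bar> powr q \<le> (2 * N / r) powr q"
      using abs_R_op_le[of r] True that q by (intro powr_mono2) (auto simp: N_def)
    then have "r * \<bar>R_op f r\<bar> powr q \<le> r * (2 * N / r) powr q"
      using that by simp
    also have "\<dots> = (2 * N) powr q * r powr (1 - q)"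
      using that N by (simp add: powr_divide powr_diff)
    finally show "r * \<bar>R_op f r\<bar> powr q \<le> (2 * N) powr q * (indicator {0..1} r * r powr (1 - q))"
      using True that by simp
  next
    case False
    then have "R_op f r = 0"
      using abs_R_op_le[of r] by simp
    then show "r * \<bar>R_op f r\<bar> powr q \<le> (2 * N) powr q * (indicator {0..1} r * r powr (1 - q))"
      using q by simp
  qed
  have "(\<integral>\<^sup>+r. k r \<partial>lborel) = ennreal ((2 * N) powr q) * ennreal (1 / (2 - q))"
    unfolding k_def using nn_integral_powr_unit_interval[of "1 - q"] q
    by (simp add: ennreal_mult nn_integral_cmult)
  also have "\<dots> = ennreal ((2 * N) powr q / (2 - q))"
    using q by (simp add: ennreal_mult[symmetric])
  finally have "(\<integral>\<^sup>+r. k r \<partial>lborel) \<le> ennreal ((2 * N) powr q / (2 - q))"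
    by simp
  from integrable_mu2_bound[OF _ _ pointwise this]
  show "integrable mu2 (\<lambda>r. \<bar>R_op f r\<bar> powr q)"
    and "(\<integral>r. \<bar>R_op f r\<bar> powr q \<partial>mu2) \<le> (2 * (\<integral>z. \<bar>f z\<bar> \<partial>mu2)) powr q / (2 - q)"
    using q by (simp_all add: N_def)
qed

lemma R_op_weak_type:
  assumes "0 < s"
  shows "emeasure mu2 {r \<in> space mu2. s < \<bar>R_op f r\<bar>}
    \<le> ennreal ((2 * (\<integral>z. \<bar>f z\<bar> \<partial>mu2) / s)\<^sup>2)"
proof -
  define M where "M = 2 * (\<integral>z. \<bar>f z\<bar> \<partial>mu2)"
  have "{r \<in> space mu2. s < \<bar>R_op f r\<bar>} \<subseteq> {0..M / s}"
  proof
    fix r assume "r \<in> {r \<in> space mu2. s < \<bar>R_op f r\<bar>}"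
    then have lt: "s < indicator {0..1} r * (M / r)"
      using abs_R_op_le[of r] by (simp add: M_def)
    have "r \<in> {0..1}"
    proof (rule ccontr)
      assume "r \<notin> {0..1}"
      with lt assms show False by simp
    qed
    moreover have "r \<noteq> 0"
    proof
      assume "r = 0"
      with lt assms show False by simp
    qed
    ultimately have "0 < r" "s < M / r"
      using lt by auto
    then show "r \<in> {0..M / s}"
      using assms by (simp add: field_simps)
  qed
  then have "emeasure mu2 {r \<in> space mu2. s < \<bar>R_op f r\<bar>} \<le> emeasure mu2 {0..M / s}"
    by (rule emeasure_mono) auto
  also have "\<dots> \<le> ennreal ((M / s)\<^sup>2)"
    using assms by (intro emeasure_mu2_atLeastAtMost_le) (simp add: M_def integral_nonneg_AE)
  finally show ?thesis
    by (simp add: M_def)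
qed

lemma R_op_Lq_norm_le:
  assumes "1 \<le> q" "q < 2"
  shows "(\<integral>r. \<bar>R_op f r\<bar> powr q \<partial>mu2) powr (1 / q)
    \<le> 2 * (1 / (2 - q)) powr (1 / q) * (\<integral>z. \<bar>f z\<bar> \<partial>mu2)"
proof (rule powr_inverse_le)
  have N: "0 \<le> (\<integral>z. \<bar>f z\<bar> \<partial>mu2)"
    by (intro integral_nonneg_AE) simp
  then have "(2 * (1 / (2 - q)) powr (1 / q) * (\<integral>z. \<bar>f z\<bar> \<partial>mu2)) powr q
      = (2 * (\<integral>z. \<bar>f z\<bar> \<partial>mu2)) powr q / (2 - q)"
    using assms by (simp add: powr_mult powr_powr powr_divide)
  then show "(\<integral>r. \<bar>R_op f r\<bar> powr q \<partial>mu2)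
      \<le> (2 * (1 / (2 - q)) powr (1 / q) * (\<integral>z. \<bar>f z\<bar> \<partial>mu2)) powr q"
    using R_op_Lq(2)[OF assms] by simp
  show "0 \<le> 2 * (1 / (2 - q)) powr (1 / q) * (\<integral>z. \<bar>f z\<bar> \<partial>mu2)"
    using N by simp
qed (use assms in \<open>auto intro: integral_nonneg_AE\<close>)

end

theorem lemma3p2:
  shows
   "(\<forall>p::real. 1 \<le> p \<longrightarrow> (\<exists>C. \<forall>f. integrable mu2 f \<longrightarrow>
        U_op f \<in> borel_measurable mu2 \<and>
        integrable mu2 (\<lambda>r. \<bar>U_op f r\<bar> powr p) \<and>
        (\<integral>r. \<bar>U_op f r\<bar> powr p \<partial>mu2) powr (1 / p) \<le> C * (\<integral>r. \<bar>f r\<bar> \<partial>mu2)))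
    \<and> (\<exists>C. \<forall>f. integrable mu2 f \<longrightarrow>
        U_op f \<in> borel_measurable mu2 \<and>
        (AE r in mu2. \<bar>U_op f r\<bar> \<le> C * (\<integral>r. \<bar>f r\<bar> \<partial>mu2)))
    \<and> (\<forall>q::real. 1 \<le> q \<and> q < 2 \<longrightarrow> (\<exists>C. \<forall>f. integrable mu2 f \<longrightarrow>
        R_op f \<in> borel_measurable mu2 \<and>
        integrable mu2 (\<lambda>r. \<bar>R_op f r\<bar> powr q) \<and>
        (\<integral>r. \<bar>R_op f r\<bar> powr q \<partial>mu2) powr (1 / q) \<le> C * (\<integral>r. \<bar>f r\<bar> \<partial>mu2)))
    \<and> (\<exists>C. \<forall>f. integrable mu2 f \<longrightarrow>
        R_op f \<in> borel_measurable mu2 \<and>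
        (\<forall>s>0. emeasure mu2 {r \<in> space mu2. s < \<bar>R_op f r\<bar>}
                 \<le> ennreal ((C * (\<integral>r. \<bar>f r\<bar> \<partial>mu2) / s) ^ 2)))"
  apply (intro conjI allI impI)
  subgoal for p
    by (intro exI[of _ 4]) (simp add: borel_measurable_mu2 borel_measurable_U_op U_op_Lp U_op_Lp_norm_le)
  subgoal
    by (intro exI[of _ 2]) (simp add: borel_measurable_mu2 borel_measurable_U_op abs_U_op_le_norm)
  subgoal for q
    by (intro exI[of _ "2 * (1 / (2 - q)) powr (1 / q)"])
       (simp add: borel_measurable_mu2 borel_measurable_R_op R_op_Lq R_op_Lq_norm_le)
  subgoal
    by (intro exI[of _ 2]) (simp add: borel_measurable_mu2 borel_measurable_R_op R_op_weak_type del: space_mu2)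
  done

end
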